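(* Let $(u_j)_{j\ge0}$ be the sequence defined by $u_j=k$ if $j=2^k$ for some $k\in\mathbb{N}$, and $u_j=0$ otherwise. Then $(u_j)_{j\ge0}\notin\ell^\infty(\mathbb{N})$ and \[\sup_{\varepsilon>0}\,\varepsilon\sum_{j\ge0}2^{-j\varepsilon}u_j\le\frac{2}{e\ln 2}.\] *)

theory Defs
  imports Complex_Main
begin

definition u_seq :: "nat \<Rightarrow> real" where
  "u_seq j = (if \<exists>k::nat. j = 2 ^ k then real (THE k::nat. j = 2 ^ k) else 0)"

end

theory Submission
  imports Defs
begin

text \<open>Only the indices \<open>j = 2^k\<close> contribute. Since \<open>x * 2 powr (-x)\<close> is maximal at
  \<open>x = 1 / ln 2\<close>, the term at \<open>j = 2^k\<close> is at most \<open>k / 2^k\<close> times \<open>1 / (\<epsilon> e ln 2)\<close>,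
  and \<open>\<Sum>k. k / 2^k = 2\<close>.\<close>

lemma u_seq_power_of_two [simp]: "u_seq (2 ^ k) = real k"
proof -
  have "(THE k'::nat. (2::nat) ^ k = 2 ^ k') = k"
    by (rule the_equality) auto
  then show ?thesis
    unfolding u_seq_def by auto
qed

lemma u_seq_eq_0: "j \<notin> range ((^) (2::nat)) \<Longrightarrow> u_seq j = 0"
  unfolding u_seq_def by auto

lemma not_Bseq_u_seq: "\<not> Bseq u_seq"
proof
  assume "Bseq u_seq"
  then obtain K where K: "\<And>n. norm (u_seq n) \<le> K"
    by (auto simp: Bseq_def)
  obtain k :: nat where "real k > K"
    using reals_Archimedean2 by blast
  with K[of "2 ^ k"] show False
    by simp
qed

lemma weighted_u_seq_sums_iff:
  "(\<lambda>j. w j * u_seq j) sums s \<longleftrightarrow> (\<lambda>k. w (2 ^ k) * real k) sums s"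
proof -
  have "strict_mono ((^) (2::nat))"
    by (simp add: strict_mono_def)
  from sums_mono_reindex[OF this, of "\<lambda>j. w j * u_seq j"] show ?thesis
    by (simp add: u_seq_eq_0)
qed

lemma mult_powr_neg_le:
  fixes b x :: real
  assumes "1 < b" "0 \<le> x"
  shows "x * b powr (- x) \<le> 1 / (exp 1 * ln b)"
proof -
  define y where "y = x * ln b"
  have "0 < ln b"
    using assms(1) by simp
  have "1 + (y - 1) \<le> exp (y - 1)"
    by (rule exp_ge_add_one_self)
  then have "y * exp (- y) \<le> 1 / exp 1"
    by (simp add: exp_diff exp_minus field_simps)
  moreover have "x * b powr (- x) = y * exp (- y) / ln b"
    using assms \<open>0 < ln b\<close> by (simp add: powr_def y_def)
  ultimately have "x * b powr (- x) \<le> 1 / exp 1 / ln b"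
    using \<open>0 < ln b\<close> by (metis divide_right_mono less_le)
  then show ?thesis
    by simp
qed

lemma of_nat_mult_power_sums:
  fixes q :: "'a::{real_normed_field,banach}"
  assumes "norm q < 1"
  shows "(\<lambda>n. of_nat n * q ^ n) sums (q / (1 - q)\<^sup>2)"
proof -
  have "(\<lambda>n. q * (of_nat (Suc n) * q ^ n)) sums (q * (1 / (1 - q)\<^sup>2))"
    by (intro sums_mult geometric_deriv_sums assms)
  then have "(\<lambda>n. of_nat (Suc n) * q ^ Suc n) sums (q / (1 - q)\<^sup>2)"
    by (simp add: mult_ac)
  from sums_Suc[OF this] show ?thesis
    by simp
qed

theorem lemma8p1:
  shows "\<not> Bseq u_seq \<and>
         (\<forall>\<epsilon>::real. \<epsilon> > 0 \<longrightarrow>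
            summable (\<lambda>j. 2 powr (- real j * \<epsilon>) * u_seq j) \<and>
            \<epsilon> * (\<Sum>j. 2 powr (- real j * \<epsilon>) * u_seq j) \<le> 2 / (exp 1 * ln 2))"
proof (intro conjI allI impI not_Bseq_u_seq)
  fix \<epsilon> :: real
  assume "\<epsilon> > 0"
  define C where "C = 1 / (exp 1 * ln (2::real))"
  define g where "g k = 2 powr (- real (2 ^ k :: nat) * \<epsilon>) * real k" for k
  define h where "h k = real k * (1/2) ^ k * (C / \<epsilon>)" for k
  have "h sums ((1/2) / (1 - 1/2)\<^sup>2 * (C / \<epsilon>))"
    unfolding h_def by (intro sums_mult2 of_nat_mult_power_sums) simp
  then have h_sums: "h sums (2 * (C / \<epsilon>))"
    by (simp add: power2_eq_square)
  have g_le_h: "g k \<le> h k" for k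
  proof -
    have "\<epsilon> * 2 ^ k * 2 powr (- (\<epsilon> * 2 ^ k)) \<le> C"
      unfolding C_def using \<open>\<epsilon> > 0\<close> by (intro mult_powr_neg_le) simp_all
    then have "real k * (1/2) ^ k * (\<epsilon> * 2 ^ k * 2 powr (- (\<epsilon> * 2 ^ k))) \<le> real k * (1/2) ^ k * C"
      by (intro mult_left_mono) auto
    then show ?thesis
      using \<open>\<epsilon> > 0\<close> by (simp add: g_def h_def power_one_over field_simps)
  qed
  have "summable g"
    by (rule summable_comparison_test[of _ h]) (use g_le_h h_sums in \<open>auto simp: g_def sums_iff\<close>)
  then have sums: "(\<lambda>j. 2 powr (- real j * \<epsilon>) * u_seq j) sums suminf g"
    unfolding weighted_u_seq_sums_iff g_def[symmetric] by (rule summable_sums)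
  then show "summable (\<lambda>j. 2 powr (- real j * \<epsilon>) * u_seq j)"
    by (simp add: sums_iff)
  have "suminf g \<le> 2 * (C / \<epsilon>)"
    using suminf_le[OF g_le_h \<open>summable g\<close>] h_sums by (simp add: sums_iff)
  then show "\<epsilon> * (\<Sum>j. 2 powr (- real j * \<epsilon>) * u_seq j) \<le> 2 / (exp 1 * ln 2)"
    using sums \<open>\<epsilon> > 0\<close> by (simp add: sums_iff C_def field_simps)
qed

end
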